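(* For any $\alpha\in(0,\frac\pi2)$ there exist constants $C_\alpha>0$ and $a_0=a_0(\alpha)>0$ such that for $u\in\mathbb{C}$ and $g=e^{i\gamma}\in\mathbb{S}^1\subset\mathbb{C}$ with $W(u,g)<a_0^2$ we may represent $u=fe^{i\psi}$ with $f\ge0$, $\psi\in\mathbb{R}$, such that $|f^2-1|\le\sqrt{2W(u,g)}<\sqrt2a_0$, and either $|\psi-\gamma-\alpha|<C_\alpha\sqrt{W(u,g)}$ or $|\psi-\gamma+\alpha|<C_\alpha\sqrt{W(u,g)}$.
   Context: $\mathbb{R}^2\simeq\mathbb{C}$ with $(u,v)=\Re[u\bar v]$; $W(u,g)=\frac12(|u|^2-1)^2+[(u,g)-\cos\alpha]^2$. *)

theory Defs
  imports "HOL-Analysis.Analysis"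
begin

text \<open>Inner product on R^2 identified with C: (u,v) = Re (u * cnj v).
  Energy W(u,g) = 1/2 (|u|^2 - 1)^2 + ((u,g) - cos alpha)^2.\<close>

definition W :: "real \<Rightarrow> complex \<Rightarrow> complex \<Rightarrow> real" where
  "W \<alpha> u g = (1/2) * ((cmod u)\<^sup>2 - 1)\<^sup>2 + (Re (u * cnj g) - cos \<alpha>)\<^sup>2"

end

theory Submission
  imports Defs
begin

text \<open>Write \<open>u = f cis (\<gamma> + \<theta>)\<close> with \<open>f = |u|\<close> and \<open>-\<pi> < \<theta> \<le> \<pi>\<close>; then
  \<open>W = (f\<^sup>2 - 1)\<^sup>2 / 2 + (f cos \<theta> - cos \<alpha>)\<^sup>2\<close>. The first term gives \<open>|f\<^sup>2 - 1| \<le> sqrt (2 W)\<close>,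
  hence \<open>|f - 1| \<le> 2 sqrt W\<close>, and with the second term \<open>|cos \<theta> - cos \<alpha>| \<le> 3 sqrt W\<close>.
  In \<open>cos \<theta> - cos \<alpha> = 2 sin ((\<theta> + \<alpha>) / 2) sin ((\<alpha> - \<theta>) / 2)\<close> the first factor is at
  least \<open>sin (\<alpha> / 2)\<close> for \<open>0 \<le> \<theta> \<le> \<pi>\<close> and the second at least \<open>|\<theta> - \<alpha>| / 6\<close>, so
  \<open>|\<theta> - \<alpha>| \<le> 9 sqrt W / sin (\<alpha> / 2)\<close>; negative \<theta> is symmetric. No smallness of \<open>W\<close> is
  needed, so \<open>a\<^sub>0 = 1\<close> works.\<close>

lemma cos_ge_one_minus_square_half:
  fixes x :: real
  shows "1 - x\<^sup>2 / 2 \<le> cos x"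
proof -
  let ?f = "\<lambda>x. cos x - 1 + x\<^sup>2 / 2"
  have "?f 0 \<le> ?f \<bar>x\<bar>"
  proof (rule DERIV_nonneg_imp_nondecreasing[of 0 "\<bar>x\<bar>"])
    fix t :: real
    assume "0 \<le> t" "t \<le> \<bar>x\<bar>"
    then have "0 \<le> t - sin t" using sin_x_le_x by auto
    moreover have "(?f has_real_derivative (t - sin t)) (at t)"
      by (auto intro!: derivative_eq_intros simp: field_simps)
    ultimately show "\<exists>y. (?f has_real_derivative y) (at t) \<and> 0 \<le> y" by blast
  qed simp
  then show ?thesis by simp
qed

lemma sin_ge_minus_cube_sixth:
  fixes x :: real
  assumes "0 \<le> x"
  shows "x - x ^ 3 / 6 \<le> sin x"
proof -
  let ?f = "\<lambda>x. sin x - x + x ^ 3 / 6"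
  have "?f 0 \<le> ?f x"
  proof (rule DERIV_nonneg_imp_nondecreasing[OF assms])
    fix t :: real
    have "0 \<le> cos t - 1 + t\<^sup>2 / 2" using cos_ge_one_minus_square_half[of t] by simp
    moreover have "(?f has_real_derivative (cos t - 1 + t\<^sup>2 / 2)) (at t)"
      by (auto intro!: derivative_eq_intros simp: field_simps power2_eq_square)
    ultimately show "\<exists>y. (?f has_real_derivative y) (at t) \<and> 0 \<le> y" by blast
  qed
  then show ?thesis by simp
qed

lemma abs_sin_ge_third:
  fixes y :: real
  assumes "\<bar>y\<bar> \<le> 2"
  shows "\<bar>y\<bar> / 3 \<le> \<bar>sin y\<bar>"
proof -
  have "\<bar>y\<bar> ^ 3 \<le> 4 * \<bar>y\<bar>"
    using mult_right_mono[OF mult_mono[OF assms assms], of "\<bar>y\<bar>"]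
    by (simp add: power3_eq_cube)
  then have "\<bar>y\<bar> / 3 \<le> sin \<bar>y\<bar>"
    using sin_ge_minus_cube_sixth[of "\<bar>y\<bar>"] by simp
  then show ?thesis by (cases "y \<ge> 0") auto
qed

lemma sin_half_sum_ge_sin_half:
  fixes \<theta> \<alpha> :: real
  assumes "0 \<le> \<theta>" "\<theta> \<le> pi" "0 < \<alpha>" "\<alpha> < pi / 2"
  shows "sin (\<alpha> / 2) \<le> sin ((\<theta> + \<alpha>) / 2)"
proof (cases "(\<theta> + \<alpha>) / 2 \<le> pi / 2")
  case True
  then show ?thesis using assms by (intro sin_monotone_2pi_le) auto
next
  case False
  have "sin (\<alpha> / 2) \<le> sin (pi - (\<theta> + \<alpha>) / 2)"
    using assms False by (intro sin_monotone_2pi_le) (auto simp: field_simps)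
  then show ?thesis by simp
qed

lemma abs_diff_le_abs_cos_diff:
  fixes \<theta> \<alpha> :: real
  assumes "0 \<le> \<theta>" "\<theta> \<le> pi" "0 < \<alpha>" "\<alpha> < pi / 2"
  shows "sin (\<alpha> / 2) * \<bar>\<theta> - \<alpha>\<bar> / 3 \<le> \<bar>cos \<theta> - cos \<alpha>\<bar>"
proof -
  have sum: "sin (\<alpha> / 2) \<le> sin ((\<theta> + \<alpha>) / 2)"
    using assms by (rule sin_half_sum_ge_sin_half)
  have pos: "0 < sin (\<alpha> / 2)" using assms by (intro sin_gt_zero) auto
  have "\<bar>(\<alpha> - \<theta>) / 2\<bar> \<le> 2" using assms pi_less_4 by auto
  then have diff: "\<bar>\<theta> - \<alpha>\<bar> / 6 \<le> \<bar>sin ((\<alpha> - \<theta>) / 2)\<bar>"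
    using abs_sin_ge_third by fastforce
  have "sin (\<alpha> / 2) * (\<bar>\<theta> - \<alpha>\<bar> / 6) \<le> sin ((\<theta> + \<alpha>) / 2) * \<bar>sin ((\<alpha> - \<theta>) / 2)\<bar>"
    using sum diff pos by (intro mult_mono) auto
  also have "\<dots> = \<bar>cos \<theta> - cos \<alpha>\<bar> / 2"
    using sum pos by (simp add: cos_diff_cos abs_mult)
  finally show ?thesis by (simp add: mult.commute)
qed

lemma abs_angle_pm_le_abs_cos_diff:
  fixes \<theta> \<alpha> :: real
  assumes "- pi < \<theta>" "\<theta> \<le> pi" "0 < \<alpha>" "\<alpha> < pi / 2"
  shows "sin (\<alpha> / 2) * \<bar>\<theta> - \<alpha>\<bar> / 3 \<le> \<bar>cos \<theta> - cos \<alpha>\<bar> \<or>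
         sin (\<alpha> / 2) * \<bar>\<theta> + \<alpha>\<bar> / 3 \<le> \<bar>cos \<theta> - cos \<alpha>\<bar>"
proof (cases "0 \<le> \<theta>")
  case True
  then show ?thesis using assms abs_diff_le_abs_cos_diff by blast
next
  case False
  then have "sin (\<alpha> / 2) * \<bar>- \<theta> - \<alpha>\<bar> / 3 \<le> \<bar>cos (- \<theta>) - cos \<alpha>\<bar>"
    using assms by (intro abs_diff_le_abs_cos_diff) auto
  moreover have "\<bar>- \<theta> - \<alpha>\<bar> = \<bar>\<theta> + \<alpha>\<bar>" by linarith
  ultimately show ?thesis by simp
qed

lemma polar_form_rotated:
  fixes u :: complex and \<gamma> :: real
  obtains \<theta> where "- pi < \<theta>" "\<theta> \<le> pi" "u = complex_of_real (cmod u) * cis (\<gamma> + \<theta>)"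
proof
  let ?v = "u * cis (- \<gamma>)"
  show "- pi < Arg ?v" "Arg ?v \<le> pi" using Arg_bounded by auto
  have "u = ?v * cis \<gamma>" by (simp add: mult.assoc cis_mult)
  also have "\<dots> = complex_of_real (cmod ?v) * cis (Arg ?v) * cis \<gamma>"
    using rcis_cmod_Arg[of ?v] by (simp add: rcis_def)
  finally show "u = complex_of_real (cmod u) * cis (\<gamma> + Arg ?v)"
    by (simp add: norm_mult cis_mult mult.assoc add.commute)
qed

lemma W_polar:
  "W \<alpha> (complex_of_real f * cis (\<gamma> + \<theta>)) (cis \<gamma>) =
     (f\<^sup>2 - 1)\<^sup>2 / 2 + (f * cos \<theta> - cos \<alpha>)\<^sup>2"
proof -
  have "cis (\<gamma> + \<theta>) * cnj (cis \<gamma>) = cis \<theta>"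
    by (simp add: cis_cnj cis_mult)
  then have "Re (complex_of_real f * cis (\<gamma> + \<theta>) * cnj (cis \<gamma>)) = f * cos \<theta>"
    by (simp add: mult.assoc)
  then show ?thesis by (simp add: W_def norm_mult)
qed

lemma abs_square_minus_one_le:
  fixes f c a :: real
  shows "\<bar>f\<^sup>2 - 1\<bar> \<le> sqrt (2 * ((f\<^sup>2 - 1)\<^sup>2 / 2 + (f * c - a)\<^sup>2))"
  by (rule real_le_rsqrt) simp

lemma abs_cos_diff_le_sqrt_energy:
  fixes f c a :: real
  assumes "0 \<le> f" "\<bar>c\<bar> \<le> 1"
  defines "w \<equiv> (f\<^sup>2 - 1)\<^sup>2 / 2 + (f * c - a)\<^sup>2"
  shows "\<bar>c - a\<bar> \<le> 3 * sqrt w"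
proof -
  have "\<bar>f - 1\<bar> \<le> \<bar>f - 1\<bar> * (f + 1)"
    using assms(1) by (simp add: mult_le_cancel_left1)
  also have "\<dots> = \<bar>(f - 1) * (f + 1)\<bar>"
    using assms(1) by (simp add: abs_mult)
  also have "\<dots> = \<bar>f\<^sup>2 - 1\<bar>"
    by (simp add: power2_eq_square algebra_simps)
  also have "\<dots> \<le> sqrt (2 * w)"
    unfolding w_def by (rule abs_square_minus_one_le)
  also have "\<dots> = sqrt 2 * sqrt w"
    by (rule real_sqrt_mult)
  also have "\<dots> \<le> 2 * sqrt w"
    using sqrt2_less_2 by (intro mult_right_mono) (auto simp: w_def)
  finally have f1: "\<bar>f - 1\<bar> \<le> 2 * sqrt w" .
  have fca: "\<bar>f * c - a\<bar> \<le> sqrt w"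
    unfolding w_def by (rule real_le_rsqrt) simp
  have "\<bar>(f - 1) * c\<bar> \<le> \<bar>f - 1\<bar>"
    using assms(2) by (simp add: abs_mult mult_left_le)
  moreover have "c - a = (f * c - a) - (f - 1) * c" by (simp add: algebra_simps)
  ultimately show ?thesis using f1 fca by linarith
qed

lemma W_polar_estimate:
  fixes \<alpha> \<gamma> :: real and u :: complex
  assumes "0 < \<alpha>" and "\<alpha> < pi / 2"
  defines "w \<equiv> W \<alpha> u (cis \<gamma>)"
  shows "\<exists>f \<psi>. f \<ge> 0 \<and> u = complex_of_real f * cis \<psi> \<and> \<bar>f\<^sup>2 - 1\<bar> \<le> sqrt (2 * w) \<and>
           (\<bar>\<psi> - \<gamma> - \<alpha>\<bar> \<le> 9 / sin (\<alpha> / 2) * sqrt w \<or>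
            \<bar>\<psi> - \<gamma> + \<alpha>\<bar> \<le> 9 / sin (\<alpha> / 2) * sqrt w)"
proof -
  obtain \<theta> where \<theta>: "- pi < \<theta>" "\<theta> \<le> pi" and u: "u = complex_of_real (cmod u) * cis (\<gamma> + \<theta>)"
    by (rule polar_form_rotated)
  have w: "w = ((cmod u)\<^sup>2 - 1)\<^sup>2 / 2 + (cmod u * cos \<theta> - cos \<alpha>)\<^sup>2"
    unfolding w_def by (subst u) (rule W_polar)
  have "\<bar>(cmod u)\<^sup>2 - 1\<bar> \<le> sqrt (2 * w)"
    unfolding w by (rule abs_square_minus_one_le)
  moreover have "\<bar>cos \<theta> - cos \<alpha>\<bar> \<le> 3 * sqrt w"
    unfolding w by (rule abs_cos_diff_le_sqrt_energy) auto
  then have "\<bar>(\<gamma> + \<theta>) - \<gamma> - \<alpha>\<bar> \<le> 9 / sin (\<alpha> / 2) * sqrt w \<or>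
             \<bar>(\<gamma> + \<theta>) - \<gamma> + \<alpha>\<bar> \<le> 9 / sin (\<alpha> / 2) * sqrt w"
    using abs_angle_pm_le_abs_cos_diff[OF \<theta> assms(1,2)] sin_gt_zero[of "\<alpha> / 2"] assms(1,2)
    by (auto simp: field_simps)
  ultimately show ?thesis using u norm_ge_zero by blast
qed

theorem lemma5p1:
  fixes \<alpha> :: real
  assumes "0 < \<alpha>" and "\<alpha> < pi / 2"
  shows "\<exists>C a0. C > 0 \<and> a0 > 0 \<and>
    (\<forall>u \<gamma>. W \<alpha> u (cis \<gamma>) < a0\<^sup>2 \<longrightarrow>
       (\<exists>f \<psi>. f \<ge> 0 \<and> u = complex_of_real f * cis \<psi> \<and>
          \<bar>f\<^sup>2 - 1\<bar> \<le> sqrt (2 * W \<alpha> u (cis \<gamma>)) \<and>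
          sqrt (2 * W \<alpha> u (cis \<gamma>)) < sqrt 2 * a0 \<and>
          (\<bar>\<psi> - \<gamma> - \<alpha>\<bar> \<le> C * sqrt (W \<alpha> u (cis \<gamma>)) \<or>
           \<bar>\<psi> - \<gamma> + \<alpha>\<bar> \<le> C * sqrt (W \<alpha> u (cis \<gamma>)))))"
proof -
  have C: "0 < 9 / sin (\<alpha> / 2)" using assms by (simp add: sin_gt_zero)
  have a0: "sqrt (2 * W \<alpha> u (cis \<gamma>)) < sqrt 2 * 1" if "W \<alpha> u (cis \<gamma>) < 1\<^sup>2" for u \<gamma>
    using that by simp
  show ?thesis
    by (rule exI[of _ "9 / sin (\<alpha> / 2)"], rule exI[of _ 1])
      (use C a0 W_polar_estimate[OF assms] in fastforce)
qed

end
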